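(* Let $\beta=(b_1,\ldots,b_m)$ be a composition of $d$. Then \[ \sum_{w\in\mathcal{L}(S_\beta,\nu)}q^{\mathrm{maj}(w)}=\sum_{D\in\mathcal{E}_d(r_1,\ldots,r_{m-1})}q^{\mathrm{maj}(D)-2(r_1+\cdots+r_{m-1})}, \] where for $m=1$ the sum $r_1+\cdots+r_{m-1}$ is $0$.
   Context: Put $r_0=0$, $r_i=b_1+\cdots+b_i$. The poset $S_\beta$ is $\bigcup_{l=1}^m\{(i,j)\in\mathbb{N}^2: l\le i\le l+1,\ r_{l-1}+1\le j\le r_l\}$ with $(i_1,j_1)\le(i_2,j_2)$ iff $i_1\le i_2$ and $j_1\le j_2$, with natural labeling $\nu(i,j)=r_{l-1}+j+(i-l)b_l$ where $r_{l-1}+1\le j\le r_l$. A linear extension is an order-preserving bijection $\sigma:S_\beta\to\{1,\ldots,2d\}$, identified with the permutation $w=\nu(\sigma^{-1}(1))\cdots\nu(\sigma^{-1}(2d))$; $\mathcal{L}(S_\beta,\nu)$ is the set of these permutations, and $\mathrm{maj}(w)=\sum\{k: w_k>w_{k+1}\}$. A Dyck path from $(0,0)$ to $(2d,0)$ is a lattice path with steps $(1,1),(1,-1)$ never going below the $x$-axis; a valley is an interior point preceded by a $(1,-1)$ step and followed by a $(1,1)$ step, a return is a valley on the $x$-axis, and $\mathrm{maj}(D)$ is the sum of the $x$-coordinates of all valleys of $D$. $\mathcal{E}_d(x_1,\ldots,x_{r})$ is the set of Dyck paths from $(0,0)$ to $(2d,0)$ having returns at $(2x_1,0),\ldots,(2x_r,0)$,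 these being exactly the marked returns (for $r=0$: Dyck paths with no marked returns). *)

theory Defs
  imports Main
begin

definition composition :: "nat list \<Rightarrow> nat \<Rightarrow> bool" where
  "composition \<beta> d \<longleftrightarrow> \<beta> \<noteq> [] \<and> (\<forall>b\<in>set \<beta>. 0 < b) \<and> sum_list \<beta> = d"

definition rr :: "nat list \<Rightarrow> nat \<Rightarrow> nat" where
  "rr \<beta> i = sum_list (take i \<beta>)"

definition S_beta :: "nat list \<Rightarrow> (nat \<times> nat) set" where
  "S_beta \<beta> = (\<Union>l\<in>{1..length \<beta>}.
      {(i, j). l \<le> i \<and> i \<le> l + 1 \<and> rr \<beta> (l - 1) + 1 \<le> j \<and> j \<le> rr \<beta> l})"

definition pt_le :: "nat \<times> nat \<Rightarrow> nat \<times> nat \<Rightarrow> bool" where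
  "pt_le x y \<longleftrightarrow> fst x \<le> fst y \<and> snd x \<le> snd y"

definition blk :: "nat list \<Rightarrow> nat \<Rightarrow> nat" where
  "blk \<beta> j = (THE l. 1 \<le> l \<and> l \<le> length \<beta> \<and> rr \<beta> (l - 1) + 1 \<le> j \<and> j \<le> rr \<beta> l)"

definition nu :: "nat list \<Rightarrow> nat \<times> nat \<Rightarrow> nat" where
  "nu \<beta> p = (let l = blk \<beta> (snd p) in
      rr \<beta> (l - 1) + snd p + (fst p - l) * \<beta> ! (l - 1))"

definition lin_ext :: "nat list \<Rightarrow> nat list set" where
  "lin_ext \<beta> = {map (\<lambda>k. nu \<beta> (inv_into (S_beta \<beta>) \<sigma> k)) [1..<2 * sum_list \<beta> + 1] | \<sigma>.
      bij_betw \<sigma> (S_beta \<beta>) {1..2 * sum_list \<beta>} \<and>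
      (\<forall>x\<in>S_beta \<beta>. \<forall>y\<in>S_beta \<beta>. pt_le x y \<longrightarrow> \<sigma> x \<le> \<sigma> y)}"

definition maj_word :: "nat list \<Rightarrow> nat" where
  "maj_word w = \<Sum>{k. 1 \<le> k \<and> k < length w \<and> w ! (k - 1) > w ! k}"

text \<open>Dyck paths as lists of steps: True = (1,1), False = (1,-1).\<close>

definition height :: "bool list \<Rightarrow> nat \<Rightarrow> int" where
  "height D k = int (length (filter id (take k D))) - int (length (filter Not (take k D)))"

definition dyck :: "nat \<Rightarrow> bool list \<Rightarrow> bool" where
  "dyck d D \<longleftrightarrow> length D = 2 * d \<and> (\<forall>k\<le>length D. 0 \<le> height D k) \<and> height D (length D) = 0"

definition valley :: "bool list \<Rightarrow> nat \<Rightarrow> bool" where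
  "valley D k \<longleftrightarrow> 0 < k \<and> k < length D \<and> \<not> D ! (k - 1) \<and> D ! k"

definition is_return :: "bool list \<Rightarrow> nat \<Rightarrow> bool" where
  "is_return D k \<longleftrightarrow> valley D k \<and> height D k = 0"

definition maj_dyck :: "bool list \<Rightarrow> nat" where
  "maj_dyck D = \<Sum>{k. valley D k}"

definition E_set :: "nat \<Rightarrow> nat list \<Rightarrow> bool list set" where
  "E_set d xs = {D. dyck d D \<and> (\<forall>x\<in>set xs. is_return D (2 * x))}"

end

theory Submission
  imports Defs
begin

text \<open>Read a linear extension of \<open>S\<^sub>\<beta>\<close> as a word in two letters: an up step for a point in
  the upper row \<open>i = l\<close> of its block \<open>l\<close>, a down step for a point in the lower row \<open>i = l + 1\<close>.
  Each row is a chain in column order, so the point at each step is determined by its letter and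
  the number of earlier equal letters. The relations \<open>(l, c) \<le> (l + 1, c)\<close> make the word a
  Dyck path, and the relations between consecutive blocks force returns at 2 r_1, ..., 2 r_(m-1);
  conversely every such path is the word of a linear extension. Under the natural labeling a
  descent occurs exactly at a lower point followed by an upper point of the same block, i.e. at
  the valleys of the path other than the marked returns, whence maj w = maj D - 2 (r_1 + ... + r_(m-1)).\<close>

lemma rr_0 [simp]: "rr \<beta> 0 = 0"
  by (simp add: rr_def)

lemma rr_mono: "l \<le> l' \<Longrightarrow> rr \<beta> l \<le> rr \<beta> l'"
  unfolding rr_def by (metis le_add_diff_inverse take_add sum_list_append le_add1)

lemma rr_Suc: "l < length \<beta> \<Longrightarrow> rr \<beta> (Suc l) = rr \<beta> l + \<beta> ! l"
  by (simp add: rr_def take_Suc_conv_app_nth)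

definition linext_list :: "('a \<Rightarrow> 'a \<Rightarrow> bool) \<Rightarrow> 'a set \<Rightarrow> 'a list \<Rightarrow> bool" where
  "linext_list le A ps \<longleftrightarrow> distinct ps \<and> set ps = A \<and>
     (\<forall>i j. i < j \<longrightarrow> j < length ps \<longrightarrow> \<not> le (ps ! j) (ps ! i))"

lemma linext_list_length: "linext_list le A ps \<Longrightarrow> length ps = card A"
  by (auto simp: linext_list_def distinct_card)

lemma linext_list_nth_mem: "linext_list le A ps \<Longrightarrow> i < length ps \<Longrightarrow> ps ! i \<in> A"
  by (auto simp: linext_list_def)

lemma linext_list_nth_eq_iff:
  "linext_list le A ps \<Longrightarrow> i < length ps \<Longrightarrow> j < length ps \<Longrightarrow> ps ! i = ps ! j \<longleftrightarrow> i = j"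
  by (auto simp: linext_list_def nth_eq_iff_index_eq)

lemma linext_list_obtain_index:
  assumes "linext_list le A ps" "x \<in> A"
  obtains i where "i < length ps" "ps ! i = x"
  using assms by (auto simp: linext_list_def in_set_conv_nth)

lemma linext_list_not_le:
  "linext_list le A ps \<Longrightarrow> i < j \<Longrightarrow> j < length ps \<Longrightarrow> \<not> le (ps ! j) (ps ! i)"
  by (auto simp: linext_list_def)

lemma linext_list_index_le:
  "linext_list le A ps \<Longrightarrow> i < length ps \<Longrightarrow> j < length ps \<Longrightarrow> le (ps ! i) (ps ! j) \<Longrightarrow> i \<le> j"
  by (meson linext_list_not_le not_le_imp_less)

lemma linext_list_index_eq_card_below:
  assumes L: "linext_list le A ps" and k: "k < length ps"
    and comparable: "\<And>y. y \<in> A \<Longrightarrow> le y (ps ! k) \<or> le (ps ! k) y"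
  shows "k = card {y \<in> A. le y (ps ! k) \<and> y \<noteq> ps ! k}"
proof -
  have "{y \<in> A. le y (ps ! k) \<and> y \<noteq> ps ! k} = (!) ps ` {..<k}"
  proof (intro set_eqI iffI)
    fix y assume y: "y \<in> {y \<in> A. le y (ps ! k) \<and> y \<noteq> ps ! k}"
    then obtain j where j: "j < length ps" "ps ! j = y"
      using linext_list_obtain_index[OF L] by blast
    then have "j \<le> k" "j \<noteq> k"
      using linext_list_index_le[OF L j(1) k] y by auto
    then show "y \<in> (!) ps ` {..<k}" using j by auto
  next
    fix y assume "y \<in> (!) ps ` {..<k}"
    then obtain i where i: "i < k" "y = ps ! i" by auto
    then show "y \<in> {y \<in> A. le y (ps ! k) \<and> y \<noteq> ps ! k}"
      using comparable[of y] linext_list_not_le[OF L i(1) k] linext_list_nth_mem[OF L]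
        linext_list_nth_eq_iff[OF L, of i k] k by auto
  qed
  moreover have "card ((!) ps ` {..<k}) = k"
    using L k by (subst card_image) (auto simp: linext_list_def intro!: inj_on_nth)
  ultimately show ?thesis by simp
qed

lemma linext_list_card_chain_before:
  assumes L: "linext_list le A ps" and k: "k < length ps"
    and chain_in: "g ` {1..n} \<subseteq> A" and inj: "inj_on g {1..n}"
    and chain_le: "\<And>c c'. c \<in> {1..n} \<Longrightarrow> c' \<in> {1..n} \<Longrightarrow> c \<le> c' \<Longrightarrow> le (g c) (g c')"
    and c: "c \<in> {1..n}" "ps ! k = g c"
  shows "card {i. i < k \<and> ps ! i \<in> g ` {1..n}} = c - 1"
proof -
  have before: "{i. i < k \<and> ps ! i \<in> g ` {1..n}} = {i. i < length ps \<and> ps ! i \<in> g ` {1..<c}}"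
  proof (intro set_eqI iffI)
    fix i assume "i \<in> {i. i < k \<and> ps ! i \<in> g ` {1..n}}"
    then obtain c' where i: "i < k" "c' \<in> {1..n}" "ps ! i = g c'" by auto
    have "\<not> c \<le> c'"
    proof
      assume "c \<le> c'"
      then show False using chain_le[OF c(1) i(2)] linext_list_not_le[OF L i(1) k] c i by simp
    qed
    then show "i \<in> {i. i < length ps \<and> ps ! i \<in> g ` {1..<c}}" using i k by auto
  next
    fix i assume "i \<in> {i. i < length ps \<and> ps ! i \<in> g ` {1..<c}}"
    then obtain c' where i: "i < length ps" "c' \<in> {1..<c}" "ps ! i = g c'" by auto
    have c': "c' \<in> {1..n}" using i c by auto
    have "i \<le> k" using chain_le[OF c' c(1)] linext_list_index_le[OF L i(1) k] i c by simp
    moreover have "g c' \<noteq> g c" using inj_onD[OF inj _ c' c(1)] i by auto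
    then have "i \<noteq> k" using c i by auto
    ultimately show "i \<in> {i. i < k \<and> ps ! i \<in> g ` {1..n}}" using c' i by auto
  qed
  have "card {i. i < k \<and> ps ! i \<in> g ` {1..n}} = length (filter (\<lambda>x. x \<in> g ` {1..<c}) ps)"
    unfolding before by (simp add: length_filter_conv_card)
  also have "\<dots> = card {x \<in> set ps. x \<in> g ` {1..<c}}"
    using L distinct_card[of "filter (\<lambda>x. x \<in> g ` {1..<c}) ps"] by (simp add: linext_list_def)
  also have "{x \<in> set ps. x \<in> g ` {1..<c}} = g ` {1..<c}"
    using L chain_in c by (auto simp: linext_list_def)
  also have "card (g ` {1..<c}) = c - 1"
    using inj c by (subst card_image) (auto intro: inj_on_subset)
  finally show ?thesis .
qed

lemma linext_list_of_bij:
  assumes bij: "bij_betw \<sigma> A {1..n}" and mono: "\<forall>x\<in>A. \<forall>y\<in>A. le x y \<longrightarrow> \<sigma> x \<le> \<sigma> y"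
  shows "linext_list le A (map (inv_into A \<sigma>) [1..<n + 1])"
  unfolding linext_list_def
proof (intro conjI allI impI)
  have inv: "bij_betw (inv_into A \<sigma>) {1..n} A" using bij_betw_inv_into[OF bij] .
  moreover have "set [1..<n + 1] = {1..n}" by auto
  ultimately show "distinct (map (inv_into A \<sigma>) [1..<n + 1])" "set (map (inv_into A \<sigma>) [1..<n + 1]) = A"
    by (simp_all add: distinct_map bij_betw_def del: upt_Suc)
  fix i j assume ij: "i < j" "j < length (map (inv_into A \<sigma>) [1..<n + 1])"
  have mem: "Suc i \<in> {1..n}" "Suc j \<in> {1..n}" using ij by (auto simp del: upt_Suc)
  show "\<not> le (map (inv_into A \<sigma>) [1..<n + 1] ! j) (map (inv_into A \<sigma>) [1..<n + 1] ! i)"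
  proof
    assume "le (map (inv_into A \<sigma>) [1..<n + 1] ! j) (map (inv_into A \<sigma>) [1..<n + 1] ! i)"
    then have "le (inv_into A \<sigma> (Suc j)) (inv_into A \<sigma> (Suc i))"
      using ij by (simp add: nth_map_upt del: upt_Suc)
    moreover have "inv_into A \<sigma> (Suc i) \<in> A" "inv_into A \<sigma> (Suc j) \<in> A"
      using bij_betw_apply[OF inv] mem by blast+
    ultimately have "\<sigma> (inv_into A \<sigma> (Suc j)) \<le> \<sigma> (inv_into A \<sigma> (Suc i))"
      using mono by blast
    then show False
      using bij mem ij by (simp add: bij_betw_def f_inv_into_f)
  qed
qed

lemma bij_of_linext_list:
  assumes L: "linext_list le A ps" and n: "length ps = n"
  obtains \<sigma> where "bij_betw \<sigma> A {1..n}" "\<forall>x\<in>A. \<forall>y\<in>A. le x y \<longrightarrow> \<sigma> x \<le> \<sigma> y"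
    "map (inv_into A \<sigma>) [1..<n + 1] = ps"
proof
  have nth: "bij_betw ((!) ps) {..<n} A"
    using L n by (intro bij_betw_nth) (auto simp: linext_list_def)
  define \<sigma> where "\<sigma> = Suc \<circ> inv_into {..<n} ((!) ps)"
  have Suc: "bij_betw Suc {..<n} {1..n}"
    by (simp add: bij_betw_def image_Suc_lessThan)
  show bij: "bij_betw \<sigma> A {1..n}"
    unfolding \<sigma>_def by (rule bij_betw_trans[OF bij_betw_inv_into[OF nth] Suc])
  have \<sigma>_nth: "\<sigma> (ps ! k) = Suc k" if "k < n" for k
    using nth that by (simp add: \<sigma>_def bij_betw_def inv_into_f_f)
  show "\<forall>x\<in>A. \<forall>y\<in>A. le x y \<longrightarrow> \<sigma> x \<le> \<sigma> y"
  proof (intro ballI impI)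
    fix x y assume "x \<in> A" "y \<in> A" "le x y"
    moreover obtain i j where "i < n" "ps ! i = x" "j < n" "ps ! j = y"
      using linext_list_obtain_index[OF L] \<open>x \<in> A\<close> \<open>y \<in> A\<close> n by metis
    ultimately show "\<sigma> x \<le> \<sigma> y"
      using linext_list_index_le[OF L] \<sigma>_nth n by auto
  qed
  have "inv_into A \<sigma> (Suc k) = ps ! k" if "k < n" for k
    using \<sigma>_nth[OF that] bij nth that by (metis bij_betw_imp_inj_on bij_betwE inv_into_f_f lessThan_iff)
  then show "map (inv_into A \<sigma>) [1..<n + 1] = ps"
    using n by (intro nth_equalityI) (auto simp del: upt_Suc)
qed

lemma order_preserving_bij_words_eq:
  assumes "card A = n"
  shows "{map (\<lambda>k. f (inv_into A \<sigma> k)) [1..<n + 1] | \<sigma>.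
            bij_betw \<sigma> A {1..n} \<and> (\<forall>x\<in>A. \<forall>y\<in>A. le x y \<longrightarrow> \<sigma> x \<le> \<sigma> y)}
         = map f ` {ps. linext_list le A ps}"
proof (intro set_eqI iffI)
  fix w assume "w \<in> {map (\<lambda>k. f (inv_into A \<sigma> k)) [1..<n + 1] | \<sigma>.
      bij_betw \<sigma> A {1..n} \<and> (\<forall>x\<in>A. \<forall>y\<in>A. le x y \<longrightarrow> \<sigma> x \<le> \<sigma> y)}"
  then obtain \<sigma> where w: "w = map (\<lambda>k. f (inv_into A \<sigma> k)) [1..<n + 1]"
    and "bij_betw \<sigma> A {1..n}" "\<forall>x\<in>A. \<forall>y\<in>A. le x y \<longrightarrow> \<sigma> x \<le> \<sigma> y"
    by blast
  moreover have "w = map f (map (inv_into A \<sigma>) [1..<n + 1])"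
    unfolding w by simp
  ultimately show "w \<in> map f ` {ps. linext_list le A ps}"
    using linext_list_of_bij by blast
next
  fix w assume "w \<in> map f ` {ps. linext_list le A ps}"
  then obtain ps where w: "w = map f ps" and L: "linext_list le A ps" by blast
  obtain \<sigma> where "bij_betw \<sigma> A {1..n}" "\<forall>x\<in>A. \<forall>y\<in>A. le x y \<longrightarrow> \<sigma> x \<le> \<sigma> y"
      and ps: "map (inv_into A \<sigma>) [1..<n + 1] = ps"
    using bij_of_linext_list[OF L] linext_list_length[OF L] assms by metis
  moreover have "w = map (\<lambda>k. f (inv_into A \<sigma> k)) [1..<n + 1]"
    unfolding w ps[symmetric] by (simp del: upt_Suc)
  ultimately show "w \<in> {map (\<lambda>k. f (inv_into A \<sigma> k)) [1..<n + 1] | \<sigma>.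
      bij_betw \<sigma> A {1..n} \<and> (\<forall>x\<in>A. \<forall>y\<in>A. le x y \<longrightarrow> \<sigma> x \<le> \<sigma> y)}"
    by blast
qed

definition ups :: "bool list \<Rightarrow> nat \<Rightarrow> nat" where
  "ups D k = length (filter id (take k D))"

definition downs :: "bool list \<Rightarrow> nat \<Rightarrow> nat" where
  "downs D k = length (filter Not (take k D))"

lemma ups_Suc: "k < length D \<Longrightarrow> ups D (Suc k) = ups D k + (if D ! k then 1 else 0)"
  and downs_Suc: "k < length D \<Longrightarrow> downs D (Suc k) = downs D k + (if D ! k then 0 else 1)"
  by (simp_all add: ups_def downs_def take_Suc_conv_app_nth)

lemma ups_mono: "k \<le> k' \<Longrightarrow> ups D k \<le> ups D k'"
  and downs_mono: "k \<le> k' \<Longrightarrow> downs D k \<le> downs D k'"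
  unfolding ups_def downs_def by (metis le_add_diff_inverse take_add filter_append length_append le_add1)+

lemma ups_add_downs: "k \<le> length D \<Longrightarrow> ups D k + downs D k = k"
  using sum_length_filter_compl[of id "take k D"] by (simp add: ups_def downs_def comp_def)

lemma ups_less: "i < j \<Longrightarrow> j \<le> length D \<Longrightarrow> D ! i \<Longrightarrow> ups D i < ups D j"
  using ups_Suc[of i D] ups_mono[of "Suc i" j D] by simp

lemma downs_less: "i < j \<Longrightarrow> j \<le> length D \<Longrightarrow> \<not> D ! i \<Longrightarrow> downs D i < downs D j"
  using downs_Suc[of i D] downs_mono[of "Suc i" j D] by simp

lemma ups_map: "k \<le> length ps \<Longrightarrow> ups (map f ps) k = card {i. i < k \<and> f (ps ! i)}"
  and downs_map: "k \<le> length ps \<Longrightarrow> downs (map f ps) k = card {i. i < k \<and> \<not> f (ps ! i)}"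
  unfolding ups_def downs_def
  by (subst length_filter_conv_card; auto intro: arg_cong[where f = card])+

lemma downs_obtain_step:
  assumes "t < downs D k"
  obtains i where "i < k" "i < length D" "\<not> D ! i" "downs D i = t"
  using assms
proof (induction k)
  case 0
  then show ?case by (simp add: downs_def)
next
  case (Suc k)
  show ?case
  proof (cases "t < downs D k")
    case True
    then show ?thesis using Suc by (meson less_SucI)
  next
    case False
    have k: "k < length D"
      using Suc.prems(2) False by (cases "k < length D") (simp_all add: downs_def)
    then have "t = downs D k" "\<not> D ! k"
      using Suc.prems(2) False downs_Suc[OF k] by (auto split: if_splits)
    then show ?thesis using Suc.prems(1) k by blast
  qed
qed

lemma height_eq_ups_minus_downs: "height D k = int (ups D k) - int (downs D k)"
  by (simp add: height_def ups_def downs_def)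

lemma dyck_iff_counts:
  "dyck d D \<longleftrightarrow> length D = 2 * d \<and> (\<forall>k \<le> length D. downs D k \<le> ups D k) \<and> ups D (length D) = d"
  using ups_add_downs[of "length D" D] by (auto simp: dyck_def height_eq_ups_minus_downs)

lemma is_return_iff_counts:
  "is_return D k \<longleftrightarrow> 0 < k \<and> k < length D \<and> \<not> D ! (k - 1) \<and> D ! k \<and> ups D k = downs D k"
  by (auto simp: is_return_def valley_def height_eq_ups_minus_downs)

text \<open>Column \<open>c\<close> of \<open>S\<^sub>\<beta>\<close> consists of the two points \<open>top_pt \<beta> c\<close> and \<open>bot_pt \<beta> c\<close>;
  \<open>is_top\<close> is the letter (up step) a point contributes to the Dyck path.\<close>

definition top_pt :: "nat list \<Rightarrow> nat \<Rightarrow> nat \<times> nat" where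
  "top_pt \<beta> c = (blk \<beta> c, c)"

definition bot_pt :: "nat list \<Rightarrow> nat \<Rightarrow> nat \<times> nat" where
  "bot_pt \<beta> c = (Suc (blk \<beta> c), c)"

definition is_top :: "nat list \<Rightarrow> nat \<times> nat \<Rightarrow> bool" where
  "is_top \<beta> p \<longleftrightarrow> fst p = blk \<beta> (snd p)"

lemma top_pt_simps [simp]:
  "fst (top_pt \<beta> c) = blk \<beta> c" "snd (top_pt \<beta> c) = c" "is_top \<beta> (top_pt \<beta> c)"
  by (simp_all add: top_pt_def is_top_def)

lemma bot_pt_simps [simp]:
  "fst (bot_pt \<beta> c) = Suc (blk \<beta> c)" "snd (bot_pt \<beta> c) = c" "\<not> is_top \<beta> (bot_pt \<beta> c)"
  by (simp_all add: bot_pt_def is_top_def)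

lemma top_pt_eq_iff [simp]: "top_pt \<beta> c = top_pt \<beta> c' \<longleftrightarrow> c = c'"
  and bot_pt_eq_iff [simp]: "bot_pt \<beta> c = bot_pt \<beta> c' \<longleftrightarrow> c = c'"
  and top_pt_neq_bot_pt [simp]: "top_pt \<beta> c \<noteq> bot_pt \<beta> c'" "bot_pt \<beta> c' \<noteq> top_pt \<beta> c"
  by (auto simp: top_pt_def bot_pt_def)

definition path_points :: "nat list \<Rightarrow> bool list \<Rightarrow> (nat \<times> nat) list" where
  "path_points \<beta> D = map (\<lambda>k. if D ! k then top_pt \<beta> (Suc (ups D k)) else bot_pt \<beta> (Suc (downs D k)))
     [0..<length D]"

lemma length_path_points [simp]: "length (path_points \<beta> D) = length D"
  by (simp add: path_points_def)

lemma nth_path_points: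
  "k < length D \<Longrightarrow>
   path_points \<beta> D ! k = (if D ! k then top_pt \<beta> (Suc (ups D k)) else bot_pt \<beta> (Suc (downs D k)))"
  by (simp add: path_points_def)

lemma map_is_top_path_points: "map (is_top \<beta>) (path_points \<beta> D) = D"
  by (rule nth_equalityI) (simp_all add: nth_path_points)

lemma distinct_path_points: "distinct (path_points \<beta> D)"
  unfolding distinct_conv_nth
proof (intro allI impI)
  have neq: "path_points \<beta> D ! i \<noteq> path_points \<beta> D ! j" if "i < j" "j < length D" for i j
    using that ups_less[of i j D] downs_less[of i j D] by (auto simp: nth_path_points)
  fix i j assume "i < length (path_points \<beta> D)" "j < length (path_points \<beta> D)" "i \<noteq> j"
  then show "path_points \<beta> D ! i \<noteq> path_points \<beta> D ! j"
    using neq[of i j] neq[of j i] by (cases i j rule: linorder_cases) auto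
qed

locale composition_poset =
  fixes \<beta> :: "nat list" and d :: nat
  assumes composition: "composition \<beta> d"
begin

lemma part_pos: "i < length \<beta> \<Longrightarrow> 0 < \<beta> ! i"
  using composition by (auto simp: composition_def)

lemma rr_length: "rr \<beta> (length \<beta>) = d"
  using composition by (simp add: composition_def rr_def)

lemma length_pos: "0 < length \<beta>"
  using composition by (simp add: composition_def)

lemma rr_strict_mono:
  assumes "l < l'" "l' \<le> length \<beta>"
  shows "rr \<beta> l < rr \<beta> l'"
proof -
  obtain k where k: "l' = Suc k" using assms(1) by (cases l') auto
  have "rr \<beta> l \<le> rr \<beta> k" using assms k by (intro rr_mono) simp
  then show ?thesis using rr_Suc[of k \<beta>] part_pos[of k] assms k by simp
qed

lemma rr_le: "rr \<beta> l \<le> d"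
  using rr_mono[of l "length \<beta>" \<beta>] rr_length by (cases "l \<le> length \<beta>") (auto simp: rr_def)

lemma rr_pos: "1 \<le> l \<Longrightarrow> l \<le> length \<beta> \<Longrightarrow> 1 \<le> rr \<beta> l"
  using rr_strict_mono[of 0 l] by simp

lemma inj_on_rr: "inj_on (rr \<beta>) {..length \<beta>}"
proof (rule inj_onI)
  fix l l' assume "l \<in> {..length \<beta>}" "l' \<in> {..length \<beta>}" "rr \<beta> l = rr \<beta> l'"
  then show "l = l'"
    using rr_strict_mono[of l l'] rr_strict_mono[of l' l] by (cases l l' rule: linorder_cases) auto
qed

lemma blk_eqI:
  assumes "1 \<le> l" "l \<le> length \<beta>" "rr \<beta> (l - 1) < c" "c \<le> rr \<beta> l"
  shows "blk \<beta> c = l"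
  unfolding blk_def
proof (rule the_equality)
  show "1 \<le> l \<and> l \<le> length \<beta> \<and> rr \<beta> (l - 1) + 1 \<le> c \<and> c \<le> rr \<beta> l"
    using assms by simp
  fix l' assume l': "1 \<le> l' \<and> l' \<le> length \<beta> \<and> rr \<beta> (l' - 1) + 1 \<le> c \<and> c \<le> rr \<beta> l'"
  have "rr \<beta> l' \<le> rr \<beta> (l - 1)" if "l' < l" using that by (intro rr_mono) simp
  moreover have "rr \<beta> l \<le> rr \<beta> (l' - 1)" if "l < l'" using that by (intro rr_mono) simp
  ultimately show "l' = l" using assms l' by (cases l' l rule: linorder_cases) auto
qed

lemma blk_bounds:
  assumes "c \<in> {1..d}"
  shows "1 \<le> blk \<beta> c" "blk \<beta> c \<le> length \<beta>" "rr \<beta> (blk \<beta> c - 1) < c" "c \<le> rr \<beta> (blk \<beta> c)"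
proof -
  define l where "l = (LEAST l. c \<le> rr \<beta> l)"
  have ex: "c \<le> rr \<beta> (length \<beta>)" using rr_length assms by simp
  have hi: "c \<le> rr \<beta> l" unfolding l_def by (rule LeastI[of _ "length \<beta>"]) (rule ex)
  have le: "l \<le> length \<beta>" unfolding l_def by (rule Least_le) (rule ex)
  have pos: "1 \<le> l" using hi assms by (cases l) auto
  have lo: "rr \<beta> (l - 1) < c"
    using not_less_Least[of "l - 1" "\<lambda>l. c \<le> rr \<beta> l"] pos unfolding l_def by fastforce
  have "blk \<beta> c = l" using hi le pos lo by (intro blk_eqI)
  then show "1 \<le> blk \<beta> c" "blk \<beta> c \<le> length \<beta>" "rr \<beta> (blk \<beta> c - 1) < c" "c \<le> rr \<beta> (blk \<beta> c)"
    using hi le pos lo by simp_all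
qed

lemma blk_le_iff:
  assumes "c \<in> {1..d}"
  shows "blk \<beta> c \<le> l \<longleftrightarrow> c \<le> rr \<beta> l"
proof
  assume "blk \<beta> c \<le> l"
  then show "c \<le> rr \<beta> l" using blk_bounds(4)[OF assms] rr_mono[of "blk \<beta> c" l \<beta>] by simp
next
  assume c: "c \<le> rr \<beta> l"
  show "blk \<beta> c \<le> l"
  proof (rule ccontr)
    assume "\<not> blk \<beta> c \<le> l"
    then have "rr \<beta> l \<le> rr \<beta> (blk \<beta> c - 1)" by (intro rr_mono) simp
    then show False using c blk_bounds(3)[OF assms] by simp
  qed
qed

lemma blk_mono: "c \<in> {1..d} \<Longrightarrow> c' \<in> {1..d} \<Longrightarrow> c \<le> c' \<Longrightarrow> blk \<beta> c \<le> blk \<beta> c'"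
  using blk_le_iff[of c "blk \<beta> c'"] blk_bounds[of c'] by simp

lemma blk_rr: "1 \<le> l \<Longrightarrow> l \<le> length \<beta> \<Longrightarrow> blk \<beta> (rr \<beta> l) = l"
  using rr_strict_mono[of "l - 1" l] by (intro blk_eqI) auto

lemma blk_Suc_rr: "l < length \<beta> \<Longrightarrow> blk \<beta> (Suc (rr \<beta> l)) = Suc l"
  using rr_strict_mono[of l "Suc l"] by (intro blk_eqI) auto

lemma mem_S_beta_iff:
  "p \<in> S_beta \<beta> \<longleftrightarrow> snd p \<in> {1..d} \<and> (fst p = blk \<beta> (snd p) \<or> fst p = Suc (blk \<beta> (snd p)))"
proof
  assume "p \<in> S_beta \<beta>"
  then obtain l i j where p: "p = (i, j)" "1 \<le> l" "l \<le> length \<beta>" "l \<le> i" "i \<le> l + 1"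
    "rr \<beta> (l - 1) + 1 \<le> j" "j \<le> rr \<beta> l"
    unfolding S_beta_def by auto
  have "blk \<beta> j = l" using p by (intro blk_eqI) auto
  then show "snd p \<in> {1..d} \<and> (fst p = blk \<beta> (snd p) \<or> fst p = Suc (blk \<beta> (snd p)))"
    using p rr_le[of l] by auto
next
  assume p: "snd p \<in> {1..d} \<and> (fst p = blk \<beta> (snd p) \<or> fst p = Suc (blk \<beta> (snd p)))"
  obtain i j where ij: "p = (i, j)" by (cases p)
  show "p \<in> S_beta \<beta>"
    unfolding S_beta_def
    by (rule UN_I[of "blk \<beta> j"]) (use p ij blk_bounds[of j] in auto)
qed

lemma S_beta_eq: "S_beta \<beta> = top_pt \<beta> ` {1..d} \<union> bot_pt \<beta> ` {1..d}"
  unfolding mem_S_beta_iff set_eq_iff by (force simp: top_pt_def bot_pt_def)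

lemma S_betaE:
  assumes "p \<in> S_beta \<beta>"
  obtains c where "c \<in> {1..d}" "p = top_pt \<beta> c" "is_top \<beta> p"
    | c where "c \<in> {1..d}" "p = bot_pt \<beta> c" "\<not> is_top \<beta> p"
  using assms unfolding S_beta_eq by auto

lemma top_pt_in_S_beta: "c \<in> {1..d} \<Longrightarrow> top_pt \<beta> c \<in> S_beta \<beta>"
  and bot_pt_in_S_beta: "c \<in> {1..d} \<Longrightarrow> bot_pt \<beta> c \<in> S_beta \<beta>"
  by (simp_all add: S_beta_eq)

lemma is_top_iff: "p \<in> S_beta \<beta> \<Longrightarrow> is_top \<beta> p \<longleftrightarrow> p \<in> top_pt \<beta> ` {1..d}"
  and not_is_top_iff: "p \<in> S_beta \<beta> \<Longrightarrow> \<not> is_top \<beta> p \<longleftrightarrow> p \<in> bot_pt \<beta> ` {1..d}"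
  by (auto elim: S_betaE)

lemma card_S_beta_columns_le:
  assumes "t \<le> d"
  shows "card {p \<in> S_beta \<beta>. snd p \<le> t} = 2 * t"
proof -
  have "{p \<in> S_beta \<beta>. snd p \<le> t} = top_pt \<beta> ` {1..t} \<union> bot_pt \<beta> ` {1..t}"
    using assms by (auto simp: S_beta_eq)
  moreover have "card (top_pt \<beta> ` {1..t} \<union> bot_pt \<beta> ` {1..t}) = 2 * t"
    by (subst card_Un_disjoint) (auto simp: card_image inj_on_def)
  ultimately show ?thesis by simp
qed

lemma card_S_beta: "card (S_beta \<beta>) = 2 * d"
proof -
  have "{p \<in> S_beta \<beta>. snd p \<le> d} = S_beta \<beta>"
    using mem_S_beta_iff by auto
  then show ?thesis using card_S_beta_columns_le[of d] by simp
qed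

lemma finite_S_beta: "finite (S_beta \<beta>)"
  by (simp add: S_beta_eq)

lemma nu_top_pt: "nu \<beta> (top_pt \<beta> c) = rr \<beta> (blk \<beta> c - 1) + c"
  by (simp add: nu_def Let_def)

lemma nu_bot_pt:
  assumes "c \<in> {1..d}"
  shows "nu \<beta> (bot_pt \<beta> c) = rr \<beta> (blk \<beta> c) + c"
proof -
  have "rr \<beta> (blk \<beta> c) = rr \<beta> (blk \<beta> c - 1) + \<beta> ! (blk \<beta> c - 1)"
    using rr_Suc[of "blk \<beta> c - 1" \<beta>] blk_bounds[OF assms] by simp
  then show ?thesis by (simp add: nu_def Let_def)
qed

lemma nu_block_bounds:
  assumes "p \<in> S_beta \<beta>"
  shows "2 * rr \<beta> (blk \<beta> (snd p) - 1) < nu \<beta> p \<and> nu \<beta> p \<le> 2 * rr \<beta> (blk \<beta> (snd p))"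
  using assms
proof (cases rule: S_betaE)
  case (1 c)
  then show ?thesis using blk_bounds[of c] nu_top_pt[of c] by simp
next
  case (2 c)
  then show ?thesis using blk_bounds[of c] nu_bot_pt[of c] by simp
qed

lemma nu_less_of_blk_less:
  assumes "p \<in> S_beta \<beta>" "p' \<in> S_beta \<beta>" "blk \<beta> (snd p) < blk \<beta> (snd p')"
  shows "nu \<beta> p < nu \<beta> p'"
proof -
  have "rr \<beta> (blk \<beta> (snd p)) \<le> rr \<beta> (blk \<beta> (snd p') - 1)"
    using assms(3) by (intro rr_mono) simp
  then show ?thesis using nu_block_bounds[OF assms(1)] nu_block_bounds[OF assms(2)] by simp
qed

lemma nu_less_iff_same_blk:
  assumes "p \<in> S_beta \<beta>" "p' \<in> S_beta \<beta>" "blk \<beta> (snd p) = blk \<beta> (snd p')"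
  shows "nu \<beta> p < nu \<beta> p' \<longleftrightarrow> fst p < fst p' \<or> fst p = fst p' \<and> snd p < snd p'"
  using assms(1)
proof (cases rule: S_betaE)
  case p: (1 c)
  from assms(2) show ?thesis
  proof (cases rule: S_betaE)
    case (1 c')
    then show ?thesis using p assms(3) by (simp add: nu_top_pt)
  next
    case (2 c')
    then show ?thesis using p assms(3) blk_bounds[of c] blk_bounds[of c'] by (simp add: nu_top_pt nu_bot_pt)
  qed
next
  case p: (2 c)
  from assms(2) show ?thesis
  proof (cases rule: S_betaE)
    case (1 c')
    then show ?thesis using p assms(3) blk_bounds[of c] blk_bounds[of c'] by (simp add: nu_top_pt nu_bot_pt)
  next
    case (2 c')
    then show ?thesis using p assms(3) by (simp add: nu_bot_pt)
  qed
qed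

lemma nu_inj_on: "inj_on (nu \<beta>) (S_beta \<beta>)"
proof (rule inj_onI)
  fix p p' assume p: "p \<in> S_beta \<beta>" and p': "p' \<in> S_beta \<beta>" and eq: "nu \<beta> p = nu \<beta> p'"
  have blk: "blk \<beta> (snd p) = blk \<beta> (snd p')"
    using nu_less_of_blk_less[OF p p'] nu_less_of_blk_less[OF p' p] eq by linarith
  have "fst p = fst p'" "snd p = snd p'"
    using nu_less_iff_same_blk[OF p p' blk] nu_less_iff_same_blk[OF p' p blk[symmetric]] eq by auto
  then show "p = p'" by (simp add: prod_eq_iff)
qed

lemma nu_descent_iff:
  assumes p: "p \<in> S_beta \<beta>" and p': "p' \<in> S_beta \<beta>" and not_le: "\<not> pt_le p' p"
  shows "nu \<beta> p' < nu \<beta> p \<longleftrightarrow> \<not> is_top \<beta> p \<and> is_top \<beta> p' \<and> blk \<beta> (snd p) = blk \<beta> (snd p')"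
proof (cases "blk \<beta> (snd p)" "blk \<beta> (snd p')" rule: linorder_cases)
  case less
  then show ?thesis using nu_less_of_blk_less[OF p p'] by simp
next
  case greater
  have "\<not> snd p \<le> snd p'"
    using greater blk_mono[of "snd p" "snd p'"] p p' by (auto simp: mem_S_beta_iff)
  then have "pt_le p' p"
    using greater p p' by (auto simp: mem_S_beta_iff pt_le_def)
  then show ?thesis using not_le by simp
next
  case equal
  then show ?thesis
    using nu_less_iff_same_blk[OF p' p] p p' not_le by (auto simp: mem_S_beta_iff pt_le_def is_top_def)
qed

abbreviation is_linext :: "(nat \<times> nat) list \<Rightarrow> bool" where
  "is_linext \<equiv> linext_list pt_le (S_beta \<beta>)"

abbreviation marked_paths :: "bool list set" where
  "marked_paths \<equiv> E_set d (map (rr \<beta>) [1..<length \<beta>])"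

lemma linext_length: "is_linext ps \<Longrightarrow> length ps = 2 * d"
  by (simp add: linext_list_length card_S_beta)

lemma pt_le_top_pt: "c \<in> {1..d} \<Longrightarrow> c' \<in> {1..d} \<Longrightarrow> c \<le> c' \<Longrightarrow> pt_le (top_pt \<beta> c) (top_pt \<beta> c')"
  and pt_le_bot_pt: "c \<in> {1..d} \<Longrightarrow> c' \<in> {1..d} \<Longrightarrow> c \<le> c' \<Longrightarrow> pt_le (bot_pt \<beta> c) (bot_pt \<beta> c')"
  using blk_mono by (simp_all add: pt_le_def)

lemma lin_ext_eq: "lin_ext \<beta> = map (nu \<beta>) ` {ps. is_linext ps}"
  using order_preserving_bij_words_eq[OF card_S_beta, of "nu \<beta>" pt_le] composition
  by (simp add: lin_ext_def composition_def del: upt_Suc)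

lemma inj_on_map_nu: "inj_on (map (nu \<beta>)) {ps. is_linext ps}"
  using nu_inj_on by (auto simp: inj_on_def linext_list_def intro: map_inj_on)

lemma linext_nth_top:
  assumes L: "is_linext ps" and k: "k < length ps" and top: "is_top \<beta> (ps ! k)"
  shows "ps ! k = top_pt \<beta> (Suc (ups (map (is_top \<beta>) ps) k))"
proof -
  obtain c where c: "c \<in> {1..d}" "ps ! k = top_pt \<beta> c"
    using linext_list_nth_mem[OF L k] top by (elim S_betaE) auto
  have "i < k \<Longrightarrow> is_top \<beta> (ps ! i) \<longleftrightarrow> ps ! i \<in> top_pt \<beta> ` {1..d}" for i
    using is_top_iff linext_list_nth_mem[OF L, of i] k by simp
  then have "{i. i < k \<and> is_top \<beta> (ps ! i)} = {i. i < k \<and> ps ! i \<in> top_pt \<beta> ` {1..d}}"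
    by blast
  moreover have chain: "top_pt \<beta> ` {1..d} \<subseteq> S_beta \<beta>" "inj_on (top_pt \<beta>) {1..d}"
    by (auto simp: S_beta_eq inj_on_def)
  ultimately have "ups (map (is_top \<beta>) ps) k = c - 1"
    using linext_list_card_chain_before[OF L k chain pt_le_top_pt c] k by (simp add: ups_map)
  then show ?thesis using c by simp
qed

lemma linext_nth_bot:
  assumes L: "is_linext ps" and k: "k < length ps" and bot: "\<not> is_top \<beta> (ps ! k)"
  shows "ps ! k = bot_pt \<beta> (Suc (downs (map (is_top \<beta>) ps) k))"
proof -
  obtain c where c: "c \<in> {1..d}" "ps ! k = bot_pt \<beta> c"
    using linext_list_nth_mem[OF L k] bot by (elim S_betaE) auto
  have "i < k \<Longrightarrow> \<not> is_top \<beta> (ps ! i) \<longleftrightarrow> ps ! i \<in> bot_pt \<beta> ` {1..d}" for i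
    using not_is_top_iff linext_list_nth_mem[OF L, of i] k by simp
  then have "{i. i < k \<and> \<not> is_top \<beta> (ps ! i)} = {i. i < k \<and> ps ! i \<in> bot_pt \<beta> ` {1..d}}"
    by blast
  moreover have chain: "bot_pt \<beta> ` {1..d} \<subseteq> S_beta \<beta>" "inj_on (bot_pt \<beta>) {1..d}"
    by (auto simp: S_beta_eq inj_on_def)
  ultimately have "downs (map (is_top \<beta>) ps) k = c - 1"
    using linext_list_card_chain_before[OF L k chain pt_le_bot_pt c] k by (simp add: downs_map)
  then show ?thesis using c by simp
qed

lemma path_points_of_linext: "is_linext ps \<Longrightarrow> path_points \<beta> (map (is_top \<beta>) ps) = ps"
  by (rule nth_equalityI) (auto simp: nth_path_points linext_nth_top[symmetric] linext_nth_bot[symmetric])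

lemma pt_le_iff_columns_le_rr:
  assumes "l \<in> {1..length \<beta>}" "p \<in> S_beta \<beta>"
  shows "pt_le p (bot_pt \<beta> (rr \<beta> l)) \<longleftrightarrow> snd p \<le> rr \<beta> l"
  using assms blk_le_iff[of "snd p" l] blk_rr[of l] by (auto simp: pt_le_def mem_S_beta_iff)

lemma linext_nth_bot_rr:
  assumes L: "is_linext ps" and l: "l \<in> {1..length \<beta>}"
  shows "ps ! (2 * rr \<beta> l - 1) = bot_pt \<beta> (rr \<beta> l)"
proof -
  have r: "rr \<beta> l \<in> {1..d}" using rr_pos[of l] rr_le[of l] l by simp
  obtain k where k: "k < length ps" "ps ! k = bot_pt \<beta> (rr \<beta> l)"
    using linext_list_obtain_index[OF L bot_pt_in_S_beta[OF r]] .
  have "k = card {p \<in> S_beta \<beta>. pt_le p (ps ! k) \<and> p \<noteq> ps ! k}"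
  proof (rule linext_list_index_eq_card_below[OF L k(1)])
    fix p assume p: "p \<in> S_beta \<beta>"
    show "pt_le p (ps ! k) \<or> pt_le (ps ! k) p"
      using pt_le_iff_columns_le_rr[OF l p] blk_le_iff[of "snd p" l] blk_rr[of l] p l k(2)
      by (auto simp: pt_le_def mem_S_beta_iff)
  qed
  also have "{p \<in> S_beta \<beta>. pt_le p (ps ! k) \<and> p \<noteq> ps ! k} = {p \<in> S_beta \<beta>. snd p \<le> rr \<beta> l} - {ps ! k}"
    using pt_le_iff_columns_le_rr[OF l] k(2) by auto
  also have "card \<dots> = 2 * rr \<beta> l - 1"
    using card_S_beta_columns_le[of "rr \<beta> l"] r k(2) bot_pt_in_S_beta[OF r] finite_S_beta
    by (subst card_Diff_singleton) auto
  finally show ?thesis using k(2) by simp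
qed

lemma linext_nth_top_Suc_rr:
  assumes L: "is_linext ps" and l: "l < length \<beta>"
  shows "ps ! (2 * rr \<beta> l) = top_pt \<beta> (Suc (rr \<beta> l))"
proof -
  have r: "Suc (rr \<beta> l) \<in> {1..d}" using rr_strict_mono[of l "Suc l"] rr_le[of "Suc l"] l by simp
  have b: "blk \<beta> (Suc (rr \<beta> l)) = Suc l" using blk_Suc_rr[OF l] .
  obtain k where k: "k < length ps" "ps ! k = top_pt \<beta> (Suc (rr \<beta> l))"
    using linext_list_obtain_index[OF L top_pt_in_S_beta[OF r]] .
  have below: "pt_le p (ps ! k) \<and> p \<noteq> ps ! k \<longleftrightarrow> snd p \<le> rr \<beta> l" if p: "p \<in> S_beta \<beta>" for p
  proof -
    have "blk \<beta> (snd p) \<le> l \<longleftrightarrow> snd p \<le> rr \<beta> l" using blk_le_iff[of "snd p" l] p by (simp add: mem_S_beta_iff)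
    then show ?thesis using p k(2) b by (auto simp: pt_le_def mem_S_beta_iff prod_eq_iff)
  qed
  have "k = card {p \<in> S_beta \<beta>. pt_le p (ps ! k) \<and> p \<noteq> ps ! k}"
  proof (rule linext_list_index_eq_card_below[OF L k(1)])
    fix p assume p: "p \<in> S_beta \<beta>"
    show "pt_le p (ps ! k) \<or> pt_le (ps ! k) p"
      using below[OF p] blk_mono[of "Suc (rr \<beta> l)" "snd p"] r p k(2) b
      by (auto simp: pt_le_def mem_S_beta_iff)
  qed
  also have "{p \<in> S_beta \<beta>. pt_le p (ps ! k) \<and> p \<noteq> ps ! k} = {p \<in> S_beta \<beta>. snd p \<le> rr \<beta> l}"
    using below by auto
  also have "card \<dots> = 2 * rr \<beta> l"
    using card_S_beta_columns_le rr_le by simp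
  finally show ?thesis using k(2) by simp
qed

text \<open>Each lower point \<open>(l + 1, c)\<close> is preceded by the upper point \<open>(l, c)\<close>.\<close>

lemma linext_downs_le_ups:
  assumes L: "is_linext ps" and k: "k \<le> length ps"
  shows "downs (map (is_top \<beta>) ps) k \<le> ups (map (is_top \<beta>) ps) k"
proof (cases "downs (map (is_top \<beta>) ps) k")
  case (Suc t)
  define D where "D = map (is_top \<beta>) ps"
  obtain i where i: "i < k" "i < length ps" "\<not> D ! i" "downs D i = t"
    using downs_obtain_step[of t D k] Suc by (auto simp: D_def)
  have bot: "ps ! i = bot_pt \<beta> (Suc t)"
    using linext_nth_bot[OF L i(2)] i by (simp add: D_def)
  then have c: "Suc t \<in> {1..d}"
    using linext_list_nth_mem[OF L i(2)] by (simp add: mem_S_beta_iff)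
  obtain i' where i': "i' < length ps" "ps ! i' = top_pt \<beta> (Suc t)"
    using linext_list_obtain_index[OF L top_pt_in_S_beta[OF c]] .
  have "i' \<le> i"
    using linext_list_index_le[OF L i'(1) i(2)] i' bot by (simp add: pt_le_def)
  moreover have "i' \<noteq> i" using i' bot by auto
  moreover have "ups D i' = t"
    using linext_nth_top[OF L i'(1)] i' by (simp add: D_def)
  ultimately have "Suc t \<le> ups D k"
    using ups_less[of i' k D] i i' k by (simp add: D_def)
  then show ?thesis using Suc by (simp add: D_def)
qed simp

lemma linext_type_in_marked_paths:
  assumes L: "is_linext ps"
  shows "map (is_top \<beta>) ps \<in> marked_paths"
proof -
  define D where "D = map (is_top \<beta>) ps"
  have len: "length D = 2 * d" using linext_length[OF L] by (simp add: D_def)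
  have at_rr: "ups D (2 * rr \<beta> l) = rr \<beta> l" "\<not> D ! (2 * rr \<beta> l - 1)"
    if l: "l \<in> {1..length \<beta>}" for l
  proof -
    have r: "1 \<le> rr \<beta> l" "rr \<beta> l \<le> d" using rr_pos[of l] rr_le[of l] l by auto
    have bot: "ps ! (2 * rr \<beta> l - 1) = bot_pt \<beta> (rr \<beta> l)" using linext_nth_bot_rr[OF L l] .
    then show nt: "\<not> D ! (2 * rr \<beta> l - 1)" using r len by (simp add: D_def)
    have idx: "2 * rr \<beta> l - 1 < length ps" using r len by (simp add: D_def)
    have "downs D (2 * rr \<beta> l - 1) = rr \<beta> l - 1"
      using linext_nth_bot[OF L idx] bot r by (simp add: D_def)
    then have "downs D (2 * rr \<beta> l) = rr \<beta> l"
      using downs_Suc[of "2 * rr \<beta> l - 1" D] nt r len by simp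
    then show "ups D (2 * rr \<beta> l) = rr \<beta> l"
      using ups_add_downs[of "2 * rr \<beta> l" D] r len by simp
  qed
  have "dyck d D"
    unfolding dyck_iff_counts
    using len linext_downs_le_ups[OF L] at_rr(1)[of "length \<beta>"] length_pos rr_length
    by (simp add: D_def)
  moreover have "is_return D (2 * rr \<beta> l)" if l: "l \<in> {1..<length \<beta>}" for l
  proof -
    have r: "1 \<le> rr \<beta> l" "rr \<beta> l < d" using rr_pos[of l] rr_strict_mono[of l "length \<beta>"] rr_length l by auto
    have "D ! (2 * rr \<beta> l)" using linext_nth_top_Suc_rr[OF L, of l] l r len by (simp add: D_def)
    then show ?thesis
      unfolding is_return_iff_counts
      using at_rr[of l] ups_add_downs[of "2 * rr \<beta> l" D] l r len by simp
  qed
  ultimately show ?thesis by (auto simp: E_set_def D_def)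
qed

lemma marked_pathsD:
  assumes "D \<in> marked_paths"
  shows "length D = 2 * d" "\<And>k. k \<le> length D \<Longrightarrow> downs D k \<le> ups D k"
    "ups D (length D) = d" "downs D (length D) = d"
    "\<And>l. l \<in> {1..<length \<beta>} \<Longrightarrow> ups D (2 * rr \<beta> l) = rr \<beta> l \<and> downs D (2 * rr \<beta> l) = rr \<beta> l"
proof -
  have dyck: "length D = 2 * d" "\<And>k. k \<le> length D \<Longrightarrow> downs D k \<le> ups D k" "ups D (length D) = d"
    using assms by (auto simp: E_set_def dyck_iff_counts)
  then show "length D = 2 * d" "\<And>k. k \<le> length D \<Longrightarrow> downs D k \<le> ups D k" "ups D (length D) = d"
    by simp_all
  show "downs D (length D) = d" using ups_add_downs[of "length D" D] dyck by simp
  fix l assume "l \<in> {1..<length \<beta>}"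
  then have "is_return D (2 * rr \<beta> l)" using assms by (auto simp: E_set_def)
  then show "ups D (2 * rr \<beta> l) = rr \<beta> l \<and> downs D (2 * rr \<beta> l) = rr \<beta> l"
    using ups_add_downs[of "2 * rr \<beta> l" D] by (simp add: is_return_iff_counts)
qed

lemma path_points_in_S_beta:
  assumes D: "D \<in> marked_paths" and k: "k < length D"
  shows "path_points \<beta> D ! k \<in> S_beta \<beta>"
proof -
  have "D ! k \<Longrightarrow> Suc (ups D k) \<le> d" "\<not> D ! k \<Longrightarrow> Suc (downs D k) \<le> d"
    using ups_less[OF k, of D] downs_less[OF k, of D] marked_pathsD(3,4)[OF D] by auto
  then show ?thesis using k by (simp add: nth_path_points S_beta_eq)
qed

text \<open>If the lower point lay in an earlier block \<open>l\<close> than the upper one, the marked return at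
  2 r_l would have to lie between the two steps; counting the steps up to it shows it cannot.\<close>

lemma marked_path_top_before_bot:
  assumes D: "D \<in> marked_paths" and ij: "i < j" "j < length D" and Di: "D ! i" and Dj: "\<not> D ! j"
  shows "\<not> pt_le (bot_pt \<beta> (Suc (downs D j))) (top_pt \<beta> (Suc (ups D i)))"
proof
  define ci where "ci = Suc (ups D i)"
  define cj where "cj = Suc (downs D j)"
  assume "pt_le (bot_pt \<beta> cj) (top_pt \<beta> ci)"
  then have lt: "blk \<beta> cj < blk \<beta> ci" by (simp add: pt_le_def)
  have ci: "ci \<in> {1..d}" and cj: "cj \<in> {1..d}"
    using path_points_in_S_beta[OF D, of i] path_points_in_S_beta[OF D, of j] ij Di Dj
    by (simp_all add: nth_path_points mem_S_beta_iff ci_def cj_def)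
  define l where "l = blk \<beta> cj"
  have l: "l \<in> {1..<length \<beta>}" using blk_bounds[OF cj] blk_bounds[OF ci] lt by (simp add: l_def)
  have "cj \<le> rr \<beta> l" "\<not> ci \<le> rr \<beta> l"
    using blk_bounds[OF cj] blk_le_iff[OF ci, of l] lt by (simp_all add: l_def)
  moreover note ret = marked_pathsD(5)[OF D l]
  moreover have "2 * rr \<beta> l \<le> i"
  proof (rule ccontr)
    assume "\<not> 2 * rr \<beta> l \<le> i"
    then have "ups D i < ups D (2 * rr \<beta> l)"
      using ups_less[of i "2 * rr \<beta> l" D] Di rr_le[of l] marked_pathsD(1)[OF D] by simp
    then show False using ret \<open>\<not> ci \<le> rr \<beta> l\<close> by (simp add: ci_def)
  qed
  then have "rr \<beta> l \<le> downs D j" using downs_mono[of "2 * rr \<beta> l" j D] ret ij by simp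
  ultimately show False by (simp add: cj_def)
qed

lemma path_points_not_le:
  assumes D: "D \<in> marked_paths" and ij: "i < j" "j < length D"
  shows "\<not> pt_le (path_points \<beta> D ! j) (path_points \<beta> D ! i)"
proof (cases "D ! i"; cases "D ! j")
  assume "D ! i" "\<not> D ! j"
  then show ?thesis using marked_path_top_before_bot[OF D ij] ij by (simp add: nth_path_points)
next
  assume Di: "\<not> D ! i" and Dj: "D ! j"
  have "Suc (downs D i) \<le> ups D j"
    using downs_Suc[of i D] marked_pathsD(2)[OF D, of "Suc i"] ups_mono[of "Suc i" j D] ij Di by simp
  then show ?thesis using Di Dj ij by (simp add: nth_path_points pt_le_def)
qed (use ij ups_less[OF ij(1), of D] downs_less[OF ij(1), of D] in \<open>auto simp: nth_path_points pt_le_def\<close>)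

lemma path_points_linext:
  assumes D: "D \<in> marked_paths"
  shows "is_linext (path_points \<beta> D)"
proof -
  have sub: "set (path_points \<beta> D) \<subseteq> S_beta \<beta>"
    using path_points_in_S_beta[OF D] by (metis in_set_conv_nth length_path_points subsetI)
  have "card (set (path_points \<beta> D)) = card (S_beta \<beta>)"
    using distinct_card[OF distinct_path_points] marked_pathsD(1)[OF D] card_S_beta by simp
  then have "set (path_points \<beta> D) = S_beta \<beta>"
    using card_subset_eq[OF finite_S_beta sub] by simp
  then show ?thesis
    using distinct_path_points path_points_not_le[OF D] by (simp add: linext_list_def)
qed

lemma bij_betw_path_points: "bij_betw (path_points \<beta>) marked_paths {ps. is_linext ps}"
proof (rule bij_betw_byWitness[where f' = "map (is_top \<beta>)"])
  show "\<forall>D\<in>marked_paths. map (is_top \<beta>) (path_points \<beta> D) = D"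
    by (simp add: map_is_top_path_points)
  show "\<forall>ps\<in>{ps. is_linext ps}. path_points \<beta> (map (is_top \<beta>) ps) = ps"
    by (simp add: path_points_of_linext)
  show "path_points \<beta> ` marked_paths \<subseteq> {ps. is_linext ps}"
    using path_points_linext by auto
  show "map (is_top \<beta>) ` {ps. is_linext ps} \<subseteq> marked_paths"
    using linext_type_in_marked_paths by auto
qed

lemma linext_step_to_later_blk:
  assumes L: "is_linext ps" and k: "0 < k" "k < length ps"
    and bot: "ps ! (k - 1) = bot_pt \<beta> c" "c \<in> {1..d}"
    and top: "ps ! k = top_pt \<beta> c'" "c' \<in> {1..d}"
    and lt: "blk \<beta> c < blk \<beta> c'"
  shows "k = 2 * rr \<beta> (blk \<beta> c)"
proof -
  define l where "l = blk \<beta> c"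
  have l: "l \<in> {1..<length \<beta>}" using blk_bounds[OF bot(2)] blk_bounds[OF top(2)] lt by (simp add: l_def)
  have r: "1 \<le> rr \<beta> l" "rr \<beta> l < d" using rr_pos[of l] rr_strict_mono[of l "length \<beta>"] rr_length l by auto
  have "pt_le (ps ! (k - 1)) (ps ! (2 * rr \<beta> l - 1))"
    using linext_nth_bot_rr[OF L, of l] l bot pt_le_bot_pt[OF bot(2), of "rr \<beta> l"] blk_bounds[OF bot(2)] r
    by (simp add: l_def)
  then have "k - 1 \<le> 2 * rr \<beta> l - 1"
    using linext_list_index_le[OF L _ _] k r linext_length[OF L] by simp
  moreover have "pt_le (ps ! (2 * rr \<beta> l)) (ps ! k)"
    using linext_nth_top_Suc_rr[OF L, of l] l top pt_le_top_pt[OF _ top(2), of "Suc (rr \<beta> l)"]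
      blk_le_iff[OF top(2), of l] lt r by (simp add: l_def)
  then have "2 * rr \<beta> l \<le> k"
    using linext_list_index_le[OF L _ k(2)] r linext_length[OF L] by simp
  ultimately show ?thesis using k(1) r by (simp add: l_def)
qed

lemma linext_valley_blk_change_iff:
  assumes L: "is_linext ps" and v: "valley (map (is_top \<beta>) ps) k"
  shows "blk \<beta> (snd (ps ! (k - 1))) \<noteq> blk \<beta> (snd (ps ! k)) \<longleftrightarrow> k \<in> (\<lambda>l. 2 * rr \<beta> l) ` {1..<length \<beta>}"
proof
  assume "k \<in> (\<lambda>l. 2 * rr \<beta> l) ` {1..<length \<beta>}"
  then obtain l where l: "l \<in> {1..<length \<beta>}" "k = 2 * rr \<beta> l" by auto
  then show "blk \<beta> (snd (ps ! (k - 1))) \<noteq> blk \<beta> (snd (ps ! k))"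
    using linext_nth_bot_rr[OF L, of l] linext_nth_top_Suc_rr[OF L, of l] blk_rr[of l] blk_Suc_rr[of l]
    by simp
next
  assume ne: "blk \<beta> (snd (ps ! (k - 1))) \<noteq> blk \<beta> (snd (ps ! k))"
  have k: "0 < k" "k < length ps" "\<not> is_top \<beta> (ps ! (k - 1))" "is_top \<beta> (ps ! k)"
    using v by (auto simp: valley_def)
  have k1: "k - 1 < length ps" using k by simp
  define c where "c = snd (ps ! (k - 1))"
  define c' where "c' = snd (ps ! k)"
  have bot: "ps ! (k - 1) = bot_pt \<beta> c" and c: "c \<in> {1..d}"
    using linext_list_nth_mem[OF L k1] k(3) by (auto elim: S_betaE simp: c_def)
  have top: "ps ! k = top_pt \<beta> c'" and c': "c' \<in> {1..d}"
    using linext_list_nth_mem[OF L k(2)] k(4) by (auto elim: S_betaE simp: c'_def)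
  have "blk \<beta> c < blk \<beta> c'"
  proof (rule ccontr)
    assume "\<not> blk \<beta> c < blk \<beta> c'"
    then have "blk \<beta> c' < blk \<beta> c" using ne by (simp add: c_def c'_def)
    moreover from this have "c' \<le> c" using blk_mono[OF c c'] by linarith
    ultimately have "pt_le (ps ! k) (ps ! (k - 1))" using top bot by (simp add: pt_le_def)
    then show False using linext_list_not_le[OF L _ k(2), of "k - 1"] k(1) by simp
  qed
  then have "k = 2 * rr \<beta> (blk \<beta> c)"
    using linext_step_to_later_blk[OF L k(1,2) bot c top c'] by simp
  moreover have "blk \<beta> c \<in> {1..<length \<beta>}"
    using blk_bounds[OF c] blk_bounds[OF c'] \<open>blk \<beta> c < blk \<beta> c'\<close> by simp
  ultimately show "k \<in> (\<lambda>l. 2 * rr \<beta> l) ` {1..<length \<beta>}" by blast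
qed

lemma linext_descents_eq:
  assumes L: "is_linext ps"
  shows "{k. 1 \<le> k \<and> k < length ps \<and> nu \<beta> (ps ! k) < nu \<beta> (ps ! (k - 1))}
       = {k. valley (map (is_top \<beta>) ps) k} - (\<lambda>l. 2 * rr \<beta> l) ` {1..<length \<beta>}"
proof -
  have descent: "nu \<beta> (ps ! k) < nu \<beta> (ps ! (k - 1)) \<longleftrightarrow>
      valley (map (is_top \<beta>) ps) k \<and> blk \<beta> (snd (ps ! (k - 1))) = blk \<beta> (snd (ps ! k))"
    if k: "1 \<le> k" "k < length ps" for k
    using nu_descent_iff[OF linext_list_nth_mem[OF L] linext_list_nth_mem[OF L]
        linext_list_not_le[OF L, of "k - 1" k]] k by (auto simp: valley_def)
  show ?thesis
  proof (intro set_eqI iffI)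
    fix k assume "k \<in> {k. 1 \<le> k \<and> k < length ps \<and> nu \<beta> (ps ! k) < nu \<beta> (ps ! (k - 1))}"
    then have "valley (map (is_top \<beta>) ps) k" "blk \<beta> (snd (ps ! (k - 1))) = blk \<beta> (snd (ps ! k))"
      using descent by auto
    then show "k \<in> {k. valley (map (is_top \<beta>) ps) k} - (\<lambda>l. 2 * rr \<beta> l) ` {1..<length \<beta>}"
      using linext_valley_blk_change_iff[OF L] by blast
  next
    fix k assume k: "k \<in> {k. valley (map (is_top \<beta>) ps) k} - (\<lambda>l. 2 * rr \<beta> l) ` {1..<length \<beta>}"
    then have v: "valley (map (is_top \<beta>) ps) k" by simp
    then have "blk \<beta> (snd (ps ! (k - 1))) = blk \<beta> (snd (ps ! k))"
      using k linext_valley_blk_change_iff[OF L v] by blast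
    then show "k \<in> {k. 1 \<le> k \<and> k < length ps \<and> nu \<beta> (ps ! k) < nu \<beta> (ps ! (k - 1))}"
      using descent v by (auto simp: valley_def)
  qed
qed

lemma maj_word_linext:
  assumes L: "is_linext ps"
  shows "maj_word (map (nu \<beta>) ps) = maj_dyck (map (is_top \<beta>) ps) - 2 * (\<Sum>l\<in>{1..<length \<beta>}. rr \<beta> l)"
proof -
  let ?V = "{k. valley (map (is_top \<beta>) ps) k}"
  let ?R = "(\<lambda>l. 2 * rr \<beta> l) ` {1..<length \<beta>}"
  have "?R \<subseteq> ?V"
    using linext_type_in_marked_paths[OF L] by (auto simp: E_set_def is_return_def)
  moreover have "finite ?V" by (rule finite_subset[of _ "{..<length ps}"]) (auto simp: valley_def)
  moreover have "inj_on (\<lambda>l. 2 * rr \<beta> l) {1..<length \<beta>}"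
    using inj_on_rr by (auto simp: inj_on_def)
  ultimately have "\<Sum>(?V - ?R) = \<Sum>?V - 2 * (\<Sum>l\<in>{1..<length \<beta>}. rr \<beta> l)"
    by (simp add: sum_diff_nat finite_subset sum.reindex sum_distrib_left)
  moreover have "maj_word (map (nu \<beta>) ps) = \<Sum>(?V - ?R)"
    unfolding maj_word_def linext_descents_eq[OF L, symmetric]
    by (intro arg_cong[where f = Sum] Collect_cong) auto
  ultimately show ?thesis by (simp add: maj_dyck_def)
qed

end

theorem proposition3p8:
  fixes \<beta> :: "nat list" and d :: nat and q :: "'a :: comm_ring_1"
  assumes "composition \<beta> d"
  shows "(\<Sum>w\<in>lin_ext \<beta>. q ^ maj_word w) =
         (\<Sum>D\<in>E_set d (map (rr \<beta>) [1..<length \<beta>]).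
             q ^ (maj_dyck D - 2 * (\<Sum>i\<in>{1..<length \<beta>}. rr \<beta> i)))"
proof -
  interpret composition_poset \<beta> d by unfold_locales (rule assms)
  have "(\<Sum>w\<in>lin_ext \<beta>. q ^ maj_word w) = (\<Sum>ps | is_linext ps. q ^ maj_word (map (nu \<beta>) ps))"
    unfolding lin_ext_eq by (simp add: sum.reindex[OF inj_on_map_nu])
  also have "\<dots> = (\<Sum>D\<in>marked_paths. q ^ maj_word (map (nu \<beta>) (path_points \<beta> D)))"
    by (rule sum.reindex_bij_betw[OF bij_betw_path_points, symmetric])
  also have "\<dots> = (\<Sum>D\<in>marked_paths. q ^ (maj_dyck D - 2 * (\<Sum>i\<in>{1..<length \<beta>}. rr \<beta> i)))"
    using maj_word_linext[OF path_points_linext] map_is_top_path_points by (intro sum.cong) auto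
  finally show ?thesis .
qed

end
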